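(* Let $n\ge1$ and work in $\mathfrak{gl}(n)$ with the notation of the context, regarding $\mathfrak{gl}(n)$ as an $\mathfrak{sl}(2)$-module (hence a $U(\mathfrak{sl}(2))$-module) via the adjoint action of the principally embedded $\mathfrak{sl}(2)$, and let $\Omega=2YX+\frac12H^2+H\in U(\mathfrak{sl}(2))$. (i) $\Omega$ is self-adjoint with respect to $\langle A,B\rangle=\mathrm{tr}(AB)$, and for $0\le l\le k\le n-1$ the element $X^lf_{kl}(H)$ is an eigenvector of $\Omega$ with eigenvalue $2k(k+1)$. The polynomials $f_{kl}$ satisfy the difference equation $$T_0(H)\nabla\triangle(f)-(l+1)(H+l)\triangle(f)+(k-l)(k+l+1)f=0.$$ (ii) For $0\le l\le k\le n-1$: $f_{kl}=\dfrac{\nabla^{k-l}(T_1\cdots T_k)}{T_1\cdots T_l}$ if $l>0$, and $f_{k0}=\nabla^k(T_1\cdots T_k)$. (iii) $\langle f_{kl},f_{kl}\rangle_l=\dfrac{(k-l)!\,(k!)^2}{(k+l)!\,(2k+1)}\,n(n^2-1^2)\cdots(n^2-k^2)$.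
   Context: Principal embedding: $Y=\sum_{i=1}^{n-1}E_{i+1,i}$, $H=\sum_{i=1}^n(n-2i+1)E_{ii}$, $X=\sum_{i=1}^{n-1}i(n-i)E_{i,i+1}$. Set $\alpha_i=n-2i+1$, $T_i(H)=\frac14(n^2-(H+2i-1)^2)$ for $i\ge0$. For a polynomial $f$, $f(H)=\mathrm{diag}(f(\alpha_1),\dots,f(\alpha_n))$, $\triangle f(H)=f(H+2)-f(H)$, $\nabla f(H)=f(H)-f(H-2)$. For $0\le l\le k\le n-1$, $f_{kl}$ is the unique polynomial of degree $<n-l$ with $(\mathrm{ad}\,Y)^{k-l}(X^k)=X^lf_{kl}(H)$. The form $\langle f,g\rangle_l=\sum_{i=l+1}^n f(\alpha_i)g(\alpha_i)T_1(\alpha_i)\cdots T_l(\alpha_i)$ (empty product $=1$ for $l=0$). *)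

theory Defs
  imports "Jordan_Normal_Form.Matrix" "HOL-Computational_Algebra.Polynomial"
begin

text \<open>Matrices in gl(n) are real n x n matrices (Jordan_Normal_Form, 0-based indices).
  The paper's 1-based index i corresponds to 0-based row/column index i - 1.\<close>

definition alpha :: "nat \<Rightarrow> nat \<Rightarrow> real" where
  "alpha n i = real n - 2 * real i + 1"

definition Ymat :: "nat \<Rightarrow> real mat" where
  "Ymat n = mat n n (\<lambda>(r, c). if r = c + 1 then 1 else 0)"

definition Hmat :: "nat \<Rightarrow> real mat" where
  "Hmat n = mat n n (\<lambda>(r, c). if r = c then alpha n (r + 1) else 0)"

definition Xmat :: "nat \<Rightarrow> real mat" where
  "Xmat n = mat n n (\<lambda>(r, c). if c = r + 1 then real (r + 1) * (real n - real (r + 1)) else 0)"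

definition polyH :: "nat \<Rightarrow> real poly \<Rightarrow> real mat" where
  "polyH n f = mat n n (\<lambda>(r, c). if r = c then poly f (alpha n (r + 1)) else 0)"

definition Tpoly :: "nat \<Rightarrow> nat \<Rightarrow> real poly" where
  "Tpoly n i = smult (1/4) ([:(real n)^2:] - [:2 * real i - 1, 1:] ^ 2)"

definition fwd_diff :: "real poly \<Rightarrow> real poly" where
  "fwd_diff f = pcompose f [:2, 1:] - f"

definition bwd_diff :: "real poly \<Rightarrow> real poly" where
  "bwd_diff f = f - pcompose f [:-2, 1:]"

definition ad :: "real mat \<Rightarrow> real mat \<Rightarrow> real mat" where
  "ad A B = A * B - B * A"

definition mtrace :: "real mat \<Rightarrow> real" where
  "mtrace A = (\<Sum>i<dim_row A. A $$ (i, i))"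

definition Omega :: "nat \<Rightarrow> real mat \<Rightarrow> real mat" where
  "Omega n A = 2 \<cdot>\<^sub>m ad (Ymat n) (ad (Xmat n) A)
              + (1/2) \<cdot>\<^sub>m ad (Hmat n) (ad (Hmat n) A) + ad (Hmat n) A"

definition fkl :: "nat \<Rightarrow> nat \<Rightarrow> nat \<Rightarrow> real poly" where
  "fkl n k l = (THE f. degree f < n - l \<and>
      (ad (Ymat n) ^^ (k - l)) (Xmat n ^\<^sub>m k) = Xmat n ^\<^sub>m l * polyH n f)"

definition ipl :: "nat \<Rightarrow> nat \<Rightarrow> real poly \<Rightarrow> real poly \<Rightarrow> real" where
  "ipl n l f g = (\<Sum>i\<in>{l+1..n}. poly f (alpha n i) * poly g (alpha n i)
                     * (\<Prod>j\<in>{1..l}. poly (Tpoly n j) (alpha n i)))"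

end

theory Submission
  imports Defs
begin

text \<open>
  Write \<open>P\<^sub>l = T\<^sub>1 \<cdots> T\<^sub>l\<close>. The matrix \<open>X\<^sup>l f(H)\<close> carries
  \<open>P\<^sub>l(alpha\<^sub>i) f(alpha\<^sub>i)\<close> on its \<open>l\<close>-th superdiagonal, and on such matrices
  \<open>ad X\<close>, \<open>ad Y\<close>, \<open>ad H\<close> act by explicit difference operators. Because
  \<open>P\<^sub>l\<^sub>+\<^sub>1\<close> vanishes just outside the range of nodes, \<open>ad Y\<close> sends
  \<open>X\<^sup>l\<^sup>+\<^sup>1 g(H)\<close> to \<open>X\<^sup>l h(H)\<close> with \<open>h = T\<^sub>l\<^sub>+\<^sub>1 g - T\<^sub>0 g(H - 2)\<close>.
  Iterating from \<open>X\<^sup>k\<close> produces \<open>f\<^sub>k\<^sub>l\<close> explicitly, and multiplied by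
  \<open>P\<^sub>l\<close> the same recursion becomes \<open>\<nabla>\<close>, which gives (ii).

  The difference operator of (i) is intertwined by this recursion (the level \<open>l + 1\<close>
  operator goes to the level \<open>l\<close> one) and annihilates \<open>f\<^sub>k\<^sub>k = 1\<close>, so it annihilates
  every \<open>f\<^sub>k\<^sub>l\<close>; on \<open>X\<^sup>l g(H)\<close> it is \<open>-1/2\<close> times \<open>\<Omega> - 2k(k + 1)\<close>, which gives
  the eigenvalue equation. Self-adjointness of \<open>\<Omega>\<close> follows from the skew-adjointness
  of \<open>ad Z\<close> for the trace form and \<open>[X, Y] = H\<close>.

  For (iii), summation by parts gives
  \<open>\<langle>f\<^sub>k\<^sub>,\<^sub>l, f\<^sub>k\<^sub>,\<^sub>l\<rangle>\<^sub>l = (k + l + 1)(k - l) \<langle>f\<^sub>k\<^sub>,\<^sub>l\<^sub>+\<^sub>1, f\<^sub>k\<^sub>,\<^sub>l\<^sub>+\<^sub>1\<rangle>\<^sub>l\<^sub>+\<^sub>1\<close>,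
  reducing everything to \<open>l = k\<close>. There \<open>P\<^sub>k(alpha\<^sub>i)\<close> is a product of two binomial
  coefficients, and the norm is the convolution
  \<open>\<Sum>\<^sub>i C(i - 1, k) C(n - i + k, k) = C(n + k, 2k + 1)\<close>.
\<close>

section \<open>The polynomials \<open>T\<^sub>j\<close> at the nodes\<close>

definition tval :: "nat \<Rightarrow> nat \<Rightarrow> real \<Rightarrow> real" where
  "tval n j y = ((real n)^2 - (y + 2 * real j - 1)^2) / 4"

definition tprod :: "nat \<Rightarrow> nat \<Rightarrow> real \<Rightarrow> real" where
  "tprod n l y = (\<Prod>j\<in>{1..l}. tval n j y)"

lemma poly_Tpoly: "poly (Tpoly n j) y = tval n j y"
  by (simp add: Tpoly_def tval_def power2_eq_square algebra_simps)

lemma poly_prod_Tpoly: "poly (\<Prod>j\<in>{1..l}. Tpoly n j) y = tprod n l y"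
  by (simp add: poly_prod poly_Tpoly tprod_def)

lemma tval_plus_2: "tval n j (y + 2) = tval n (Suc j) y"
  by (simp add: tval_def algebra_simps)

lemma tval_Suc_minus_2: "tval n (Suc j) (y - 2) = tval n j y"
  using tval_plus_2[of n j "y - 2"] by simp

lemma tval_Suc: "tval n (Suc l) y = tval n 0 y - (real l + 1) * (y + real l)"
  by (simp add: tval_def power2_eq_square field_simps)

lemma alpha_Suc: "alpha n (Suc i) = alpha n i - 2"
  by (simp add: alpha_def)

lemma tval_alpha: "tval n j (alpha n i) = (real i - real j) * (real n - real i + real j)"
  unfolding tval_def alpha_def by (simp add: power2_eq_square field_simps) algebra

lemma tprod_0 [simp]: "tprod n 0 y = 1"
  by (simp add: tprod_def)

lemma tprod_Suc: "tprod n (Suc l) y = tprod n l y * tval n (Suc l) y"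
  by (simp add: tprod_def prod.nat_ivl_Suc' mult.commute)

lemma tprod_Suc_shift: "tprod n (Suc l) y = tval n 1 y * tprod n l (y + 2)"
proof (induction l arbitrary: y)
  case (Suc l)
  have "tprod n (Suc (Suc l)) y = tval n 1 y * tprod n l (y + 2) * tval n (Suc l) (y + 2)"
    using Suc by (simp add: tprod_Suc tval_plus_2)
  then show ?case
    by (simp add: tprod_Suc)
qed (simp add: tprod_def)

lemma tprod_Suc_minus_2: "tprod n (Suc l) (y - 2) = tval n 0 y * tprod n l y"
  using tprod_Suc_shift[of n l "y - 2"] tval_Suc_minus_2[of n 0 y] by simp

lemma tprod_alpha_eq_0: "1 \<le> l \<Longrightarrow> tprod n l (alpha n l) = 0"
  unfolding tprod_def by (rule prod_zero) (auto simp: tval_alpha intro!: bexI[of _ l])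

lemma tprod_alpha_Suc_eq_0: "1 \<le> l \<Longrightarrow> tprod n l (alpha n (Suc n)) = 0"
  unfolding tprod_def by (rule prod_zero) (auto simp: tval_alpha intro!: bexI[of _ 1])

lemma tprod_alpha_pos: "l < i \<Longrightarrow> i \<le> n \<Longrightarrow> tprod n l (alpha n i) > 0"
  unfolding tprod_def by (rule prod_pos) (auto simp: tval_alpha)

section \<open>Superdiagonal matrices\<close>

lemma Xmat_carrier [simp]: "Xmat n \<in> carrier_mat n n"
  by (simp add: Xmat_def)

lemma Ymat_carrier [simp]: "Ymat n \<in> carrier_mat n n"
  by (simp add: Ymat_def)

lemma Hmat_carrier [simp]: "Hmat n \<in> carrier_mat n n"
  by (simp add: Hmat_def)

lemma dim_Xmat [simp]: "dim_row (Xmat n) = n" "dim_col (Xmat n) = n"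
  by (simp_all add: Xmat_def)

lemma dim_Ymat [simp]: "dim_row (Ymat n) = n" "dim_col (Ymat n) = n"
  by (simp_all add: Ymat_def)

lemma dim_Hmat [simp]: "dim_row (Hmat n) = n" "dim_col (Hmat n) = n"
  by (simp_all add: Hmat_def)

definition superdiag :: "nat \<Rightarrow> nat \<Rightarrow> (real \<Rightarrow> real) \<Rightarrow> real mat" where
  "superdiag n l F = mat n n (\<lambda>(r, c). if c = r + l then F (alpha n (c + 1)) else 0)"

lemma superdiag_carrier [simp]: "superdiag n l F \<in> carrier_mat n n"
  by (simp add: superdiag_def)

lemma dim_superdiag [simp]: "dim_row (superdiag n l F) = n" "dim_col (superdiag n l F) = n"
  by (simp_all add: superdiag_def)

lemma index_superdiag:
  "r < n \<Longrightarrow> c < n \<Longrightarrow> superdiag n l F $$ (r, c) = (if c = r + l then F (alpha n (c + 1)) else 0)"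
  by (simp add: superdiag_def)

lemma superdiag_eq_iff:
  "superdiag n l F = superdiag n l G \<longleftrightarrow> (\<forall>i\<in>{l+1..n}. F (alpha n i) = G (alpha n i))"
proof
  assume eq: "superdiag n l F = superdiag n l G"
  show "\<forall>i\<in>{l+1..n}. F (alpha n i) = G (alpha n i)"
  proof
    fix i assume "i \<in> {l+1..n}"
    then obtain r where r: "i = r + l + 1" "r + l < n"
      by (metis atLeastAtMost_iff add.commute le_iff_add add_Suc_right le_simps(3) plus_1_eq_Suc)
    have "superdiag n l F $$ (r, r + l) = superdiag n l G $$ (r, r + l)"
      using eq by simp
    then show "F (alpha n i) = G (alpha n i)"
      using r by (simp add: index_superdiag)
  qed
next
  assume "\<forall>i\<in>{l+1..n}. F (alpha n i) = G (alpha n i)"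
  then show "superdiag n l F = superdiag n l G"
    by (intro eq_matI) (auto simp: index_superdiag)
qed

lemma zero_eq_superdiag: "0\<^sub>m n n = superdiag n l (\<lambda>y. 0)"
  by (rule eq_matI) (auto simp: index_superdiag)

lemma superdiag_add: "superdiag n l F + superdiag n l G = superdiag n l (\<lambda>y. F y + G y)"
  by (rule eq_matI) (auto simp: index_superdiag)

lemma superdiag_diff: "superdiag n l F - superdiag n l G = superdiag n l (\<lambda>y. F y - G y)"
  by (rule eq_matI) (auto simp: index_superdiag)

lemma smult_superdiag: "a \<cdot>\<^sub>m superdiag n l F = superdiag n l (\<lambda>y. a * F y)"
  by (rule eq_matI) (auto simp: index_superdiag)

lemma index_mult_square:
  "A \<in> carrier_mat n n \<Longrightarrow> B \<in> carrier_mat n n \<Longrightarrow> i < n \<Longrightarrow> j < n \<Longrightarrow>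
    (A * B) $$ (i, j) = (\<Sum>s<n. A $$ (i, s) * B $$ (s, j))"
  by (auto simp: scalar_prod_def lessThan_atLeast0 intro!: sum.cong)

lemma sum_lessThan_single:
  assumes "\<And>s. s < (n::nat) \<Longrightarrow> s \<noteq> a \<Longrightarrow> f s = 0"
  shows "(\<Sum>s<n. f s) = (if a < n then f a else 0)"
proof -
  have "(\<Sum>s<n. f s) = (\<Sum>s<n. if s = a then f a else 0)"
    using assms by (intro sum.cong) auto
  then show ?thesis
    by simp
qed

text \<open>Column \<open>c\<close> of the product sees column \<open>c - m\<close> of the left factor, and
  \<open>alpha n (c + 1 - m) = alpha n (c + 1) + 2 m\<close>: hence the shift of \<open>F\<close>.\<close>
lemma superdiag_mult:
  "superdiag n l F * superdiag n m G = superdiag n (l + m) (\<lambda>y. F (y + 2 * real m) * G y)"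
proof (rule eq_matI)
  fix r c assume "r < dim_row (superdiag n (l + m) (\<lambda>y. F (y + 2 * real m) * G y))"
    and "c < dim_col (superdiag n (l + m) (\<lambda>y. F (y + 2 * real m) * G y))"
  then have rc: "r < n" "c < n" by simp_all
  have "(superdiag n l F * superdiag n m G) $$ (r, c)
      = (if r + l < n then superdiag n l F $$ (r, r + l) * superdiag n m G $$ (r + l, c) else 0)"
    unfolding index_mult_square[OF superdiag_carrier superdiag_carrier rc]
    by (rule sum_lessThan_single) (use rc in \<open>simp add: index_superdiag\<close>)
  also have "\<dots> = superdiag n (l + m) (\<lambda>y. F (y + 2 * real m) * G y) $$ (r, c)"
  proof -
    have "alpha n (r + l + 1) = alpha n (r + (l + m) + 1) + 2 * real m"
      by (simp add: alpha_def)
    then show ?thesis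
      using rc by (auto simp: index_superdiag)
  qed
  finally show "(superdiag n l F * superdiag n m G) $$ (r, c)
      = superdiag n (l + m) (\<lambda>y. F (y + 2 * real m) * G y) $$ (r, c)" .
qed simp_all

lemma Hmat_eq_superdiag: "Hmat n = superdiag n 0 (\<lambda>y. y)"
  by (rule eq_matI) (auto simp: Hmat_def index_superdiag)

lemma polyH_eq_superdiag: "polyH n f = superdiag n 0 (poly f)"
  by (rule eq_matI) (auto simp: polyH_def index_superdiag)

lemma Xmat_eq_superdiag: "Xmat n = superdiag n 1 (tval n 1)"
  by (rule eq_matI) (auto simp: Xmat_def index_superdiag tval_alpha)

lemma Xmat_pow_eq_superdiag: "Xmat n ^\<^sub>m l = superdiag n l (tprod n l)"
proof (induction l)
  case 0
  show ?case
    by (rule eq_matI) (auto simp: index_superdiag)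
next
  case (Suc l)
  then show ?case
    by (simp add: Xmat_eq_superdiag superdiag_mult tprod_Suc_shift mult.commute)
qed

lemma Xmat_pow_mult_polyH: "Xmat n ^\<^sub>m l * polyH n f = superdiag n l (\<lambda>y. tprod n l y * poly f y)"
  by (simp add: Xmat_pow_eq_superdiag polyH_eq_superdiag superdiag_mult)

lemma ad_Hmat_superdiag: "ad (Hmat n) (superdiag n l F) = superdiag n l (\<lambda>y. 2 * real l * F y)"
  by (simp add: ad_def Hmat_eq_superdiag superdiag_mult superdiag_diff algebra_simps)

lemma ad_Xmat_superdiag:
  "ad (Xmat n) (superdiag n l F)
    = superdiag n (Suc l) (\<lambda>y. tval n (Suc l) y * F y - F (y + 2) * tval n 1 y)"
proof -
  have "tval n 1 (y + 2 * real l) = tval n (Suc l) y" for y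
    by (simp add: tval_def algebra_simps)
  then show ?thesis
    by (simp add: ad_def Xmat_eq_superdiag superdiag_mult superdiag_diff)
qed


lemma Ymat_mult_superdiag:
  assumes "F (alpha n (Suc l)) = 0"
  shows "Ymat n * superdiag n (Suc l) F = superdiag n l F"
proof (rule eq_matI)
  fix r c assume "r < dim_row (superdiag n l F)" "c < dim_col (superdiag n l F)"
  then have rc: "r < n" "c < n" by simp_all
  have "(Ymat n * superdiag n (Suc l) F) $$ (r, c)
      = (if r - 1 < n then Ymat n $$ (r, r - 1) * superdiag n (Suc l) F $$ (r - 1, c) else 0)"
    unfolding index_mult_square[OF Ymat_carrier superdiag_carrier rc]
    by (rule sum_lessThan_single) (use rc in \<open>auto simp: Ymat_def\<close>)
  also have "\<dots> = superdiag n l F $$ (r, c)"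
    using rc assms by (cases r) (auto simp: Ymat_def index_superdiag)
  finally show "(Ymat n * superdiag n (Suc l) F) $$ (r, c) = superdiag n l F $$ (r, c)" .
qed simp_all

lemma superdiag_mult_Ymat:
  assumes "F (alpha n (Suc n)) = 0"
  shows "superdiag n (Suc l) F * Ymat n = superdiag n l (\<lambda>y. F (y - 2))"
proof (rule eq_matI)
  fix r c assume "r < dim_row (superdiag n l (\<lambda>y. F (y - 2)))"
    "c < dim_col (superdiag n l (\<lambda>y. F (y - 2)))"
  then have rc: "r < n" "c < n" by simp_all
  have "(superdiag n (Suc l) F * Ymat n) $$ (r, c)
      = (if c + 1 < n then superdiag n (Suc l) F $$ (r, c + 1) * Ymat n $$ (c + 1, c) else 0)"
    unfolding index_mult_square[OF superdiag_carrier Ymat_carrier rc]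
    by (rule sum_lessThan_single) (use rc in \<open>auto simp: Ymat_def\<close>)
  also have "\<dots> = superdiag n l (\<lambda>y. F (y - 2)) $$ (r, c)"
  proof (cases "c + 1 < n")
    case True
    then show ?thesis
      using rc by (simp add: Ymat_def index_superdiag alpha_Suc)
  next
    case False
    then have "alpha n (c + 1) - 2 = alpha n (Suc n)"
      using rc by (simp add: alpha_def)
    then show ?thesis
      using rc False assms by (auto simp: index_superdiag)
  qed
  finally show "(superdiag n (Suc l) F * Ymat n) $$ (r, c) = superdiag n l (\<lambda>y. F (y - 2)) $$ (r, c)" .
qed simp_all

text \<open>No boundary terms arise because \<open>T\<^sub>1 \<cdots> T\<^sub>l\<^sub>+\<^sub>1\<close> vanishes at \<open>alpha n (l + 1)\<close> and
  \<open>alpha n (n + 1)\<close>, just outside the nodes of the \<open>l\<close>-th superdiagonal.\<close>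
lemma ad_Ymat_superdiag_tprod:
  "ad (Ymat n) (superdiag n (Suc l) (\<lambda>y. tprod n (Suc l) y * G y))
    = superdiag n l (\<lambda>y. tprod n l y * (tval n (Suc l) y * G y - tval n 0 y * G (y - 2)))"
proof -
  have "ad (Ymat n) (superdiag n (Suc l) (\<lambda>y. tprod n (Suc l) y * G y))
      = superdiag n l (\<lambda>y. tprod n (Suc l) y * G y - tprod n (Suc l) (y - 2) * G (y - 2))"
    unfolding ad_def superdiag_diff[symmetric]
    by (simp add: Ymat_mult_superdiag superdiag_mult_Ymat tprod_alpha_eq_0 tprod_alpha_Suc_eq_0)
  then show ?thesis
    by (simp only: tprod_Suc_minus_2) (simp add: tprod_Suc algebra_simps)
qed

lemma ad_Xmat_superdiag_tprod:
  "ad (Xmat n) (superdiag n l (\<lambda>y. tprod n l y * G y))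
    = superdiag n (Suc l) (\<lambda>y. tprod n (Suc l) y * (G y - G (y + 2)))"
proof -
  have "tval n (Suc l) y * (tprod n l y * G y) - tprod n l (y + 2) * G (y + 2) * tval n 1 y
      = tprod n (Suc l) y * (G y - G (y + 2))" for y
  proof -
    have a: "tprod n (Suc l) y * G y = tval n (Suc l) y * (tprod n l y * G y)"
      by (simp add: tprod_Suc)
    have b: "tprod n (Suc l) y * G (y + 2) = tprod n l (y + 2) * G (y + 2) * tval n 1 y"
      by (simp add: tprod_Suc_shift)
    show ?thesis
      unfolding right_diff_distrib a b ..
  qed
  then show ?thesis
    unfolding ad_Xmat_superdiag by simp
qed

section \<open>The polynomials \<open>f\<^sub>k\<^sub>l\<close>\<close>

definition adY_poly :: "nat \<Rightarrow> nat \<Rightarrow> real poly \<Rightarrow> real poly" where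
  "adY_poly n l g = Tpoly n l * g - Tpoly n 0 * pcompose g [:-2, 1:]"

text \<open>\<open>adY_poly_iter n k m\<close> is \<open>f\<^sub>k\<^sub>,\<^sub>k\<^sub>-\<^sub>m\<close> (see \<open>fkl_eq_adY_poly_iter\<close>).\<close>
fun adY_poly_iter :: "nat \<Rightarrow> nat \<Rightarrow> nat \<Rightarrow> real poly" where
  "adY_poly_iter n k 0 = 1"
| "adY_poly_iter n k (Suc m) = adY_poly n (k - m) (adY_poly_iter n k m)"

lemma poly_adY_poly: "poly (adY_poly n l g) y = tval n l y * poly g y - tval n 0 y * poly g (y - 2)"
  by (simp add: adY_poly_def poly_Tpoly poly_pcompose)

lemma poly_bwd_diff: "poly (bwd_diff f) y = poly f y - poly f (y - 2)"
  by (simp add: bwd_diff_def poly_pcompose)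

lemma poly_fwd_diff: "poly (fwd_diff f) y = poly f (y + 2) - poly f y"
  by (simp add: fwd_diff_def poly_pcompose add.commute)

lemma ad_Ymat_iter_Xmat_pow:
  "m \<le> k \<Longrightarrow> (ad (Ymat n) ^^ m) (Xmat n ^\<^sub>m k)
    = superdiag n (k - m) (\<lambda>y. tprod n (k - m) y * poly (adY_poly_iter n k m) y)"
proof (induction m)
  case 0
  then show ?case
    by (simp add: Xmat_pow_eq_superdiag)
next
  case (Suc m)
  then have "k - m = Suc (k - Suc m)"
    by simp
  with Suc show ?case
    by (simp add: ad_Ymat_superdiag_tprod poly_adY_poly)
qed

lemma prod_Tpoly_mult_adY_poly_iter:
  "m \<le> k \<Longrightarrow> (\<Prod>j\<in>{1..k - m}. Tpoly n j) * adY_poly_iter n k m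
    = (bwd_diff ^^ m) (\<Prod>j\<in>{1..k}. Tpoly n j)"
proof (induction m)
  case (Suc m)
  then have km: "k - m = Suc (k - Suc m)"
    by simp
  have IH: "poly ((bwd_diff ^^ m) (\<Prod>j\<in>{1..k}. Tpoly n j)) y
      = tprod n (Suc (k - Suc m)) y * poly (adY_poly_iter n k m) y" for y
  proof -
    have "(bwd_diff ^^ m) (\<Prod>j\<in>{1..k}. Tpoly n j) = (\<Prod>j\<in>{1..k - m}. Tpoly n j) * adY_poly_iter n k m"
      using Suc by simp
    then show ?thesis
      by (simp only: poly_mult poly_prod_Tpoly km)
  qed
  show ?case
    by (rule poly_ext, simp only: poly_mult poly_prod_Tpoly adY_poly_iter.simps poly_adY_poly km
        poly_bwd_diff funpow.simps o_apply IH tprod_Suc_minus_2 diff_Suc_Suc)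
      (simp add: tprod_Suc algebra_simps)
qed simp

lemma Tpoly_eq_pCons:
  "Tpoly n j = [:((real n)^2 - (2 * real j - 1)^2) / 4, - (2 * real j - 1) / 2, - 1 / 4:]"
  by (rule poly_ext) (simp add: poly_Tpoly tval_def power2_eq_square field_simps, algebra)

lemma degree_Tpoly [simp]: "degree (Tpoly n j) = 2"
  by (simp add: Tpoly_eq_pCons)

lemma coeff_Tpoly_2 [simp]: "coeff (Tpoly n j) 2 = - 1 / 4"
  by (simp add: Tpoly_eq_pCons numeral_2_eq_2)

text \<open>The leading terms of \<open>T\<^sub>l g\<close> and \<open>T\<^sub>0 g(H - 2)\<close> cancel.\<close>
lemma degree_adY_poly: "degree (adY_poly n l g) \<le> degree g + 1"
proof (cases "g = 0")
  case False
  let ?d = "degree g" and ?h = "pcompose g [:-2, 1:]"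
  have dh: "degree ?h = ?d"
    by (simp add: degree_pcompose)
  have lh: "coeff ?h ?d = coeff g ?d"
    using lead_coeff_comp[of "[:-2, 1:]" g] dh by simp
  have d1: "degree (Tpoly n l * g) \<le> ?d + 2" and d2: "degree (Tpoly n 0 * ?h) \<le> ?d + 2"
    using degree_mult_le[of "Tpoly n l" g] degree_mult_le[of "Tpoly n 0" ?h] dh by simp_all
  have "coeff (Tpoly n l * g) (?d + 2) = coeff (Tpoly n 0 * ?h) (?d + 2)"
    using coeff_mult_degree_sum[of "Tpoly n l" g] coeff_mult_degree_sum[of "Tpoly n 0" ?h]
    by (simp add: dh lh add.commute)
  then have "coeff (adY_poly n l g) i = 0" if "?d + 1 < i" for i
    using that d1 d2 by (cases "i = ?d + 2") (simp_all add: adY_poly_def coeff_eq_0)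
  then show ?thesis
    by (intro degree_le) auto
qed (simp add: adY_poly_def)

lemma degree_adY_poly_iter: "degree (adY_poly_iter n k m) \<le> m"
  by (induction m) (auto intro: order.trans[OF degree_adY_poly])

lemma card_alpha_image: "card (alpha n ` {l+1..n}) = n - l"
proof -
  have "inj_on (alpha n) {l+1..n}"
    by (auto intro: inj_onI simp: alpha_def)
  then show ?thesis
    by (simp add: card_image)
qed

text \<open>\<open>fkl\<close> is well defined: on the \<open>n - l\<close> nodes \<open>alpha n i\<close>, \<open>l < i \<le> n\<close>, the weight
  \<open>T\<^sub>1 \<cdots> T\<^sub>l\<close> is positive, so \<open>X\<^sup>l f(H)\<close> determines \<open>f\<close> among polynomials of degree
  \<open>< n - l\<close>.\<close>
lemma fkl_eq_adY_poly_iter: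
  assumes "l \<le> k" "k < n"
  shows "fkl n k l = adY_poly_iter n k (k - l)"
  unfolding fkl_def
proof (rule the_equality)
  let ?g = "adY_poly_iter n k (k - l)"
  have ad_iter: "(ad (Ymat n) ^^ (k - l)) (Xmat n ^\<^sub>m k) = Xmat n ^\<^sub>m l * polyH n ?g"
    using ad_Ymat_iter_Xmat_pow[of "k - l" k n] assms by (simp add: Xmat_pow_mult_polyH)
  have deg: "degree ?g < n - l"
    using degree_adY_poly_iter[of n k "k - l"] assms by simp
  show "degree ?g < n - l \<and> (ad (Ymat n) ^^ (k - l)) (Xmat n ^\<^sub>m k) = Xmat n ^\<^sub>m l * polyH n ?g"
    using deg ad_iter ..
  fix f assume f: "degree f < n - l \<and> (ad (Ymat n) ^^ (k - l)) (Xmat n ^\<^sub>m k) = Xmat n ^\<^sub>m l * polyH n f"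
  then have "\<forall>i\<in>{l+1..n}. tprod n l (alpha n i) * poly ?g (alpha n i)
      = tprod n l (alpha n i) * poly f (alpha n i)"
    using ad_iter by (simp add: Xmat_pow_mult_polyH superdiag_eq_iff)
  moreover have "tprod n l (alpha n i) \<noteq> 0" if "i \<in> {l+1..n}" for i
    using that tprod_alpha_pos[of l i n] by simp
  ultimately have "poly f x = poly ?g x" if "x \<in> alpha n ` {l+1..n}" for x
    using that by auto
  then show "f = ?g"
    by (rule poly_eqI_degree) (use f deg card_alpha_image[of n l] in auto)
qed

section \<open>The difference equation and the eigenvalue\<close>

definition diff_op :: "nat \<Rightarrow> nat \<Rightarrow> nat \<Rightarrow> real poly \<Rightarrow> real poly" where
  "diff_op n k l f = Tpoly n 0 * bwd_diff (fwd_diff f)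
     - smult (real (l + 1)) ([:real l, 1:] * fwd_diff f)
     + smult (real (k - l) * real (k + l + 1)) f"

lemma poly_diff_op:
  "l \<le> k \<Longrightarrow> poly (diff_op n k l f) y
    = tval n 0 y * ((poly f (y + 2) - poly f y) - (poly f y - poly f (y - 2)))
      - (real l + 1) * (real l + y) * (poly f (y + 2) - poly f y)
      + (real k - real l) * (real k + real l + 1) * poly f y"
  by (simp add: diff_op_def poly_Tpoly poly_bwd_diff poly_fwd_diff of_nat_diff algebra_simps)

lemma diff_op_adY_poly:
  assumes "Suc l \<le> k"
  shows "diff_op n k l (adY_poly n (Suc l) g) = adY_poly n (Suc l) (diff_op n k (Suc l) g)"
proof (rule poly_ext)
  fix y :: real
  have shift: "y + 2 - 2 = y" "y - 2 + 2 = y" "y - 2 - 2 = y - 4"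
    by simp_all
  show "poly (diff_op n k l (adY_poly n (Suc l) g)) y = poly (adY_poly n (Suc l) (diff_op n k (Suc l) g)) y"
    using assms
    by (simp add: poly_diff_op poly_adY_poly shift tval_def power2_eq_square
        algebra_simps diff_divide_distrib add_divide_distrib)
qed

lemma diff_op_adY_poly_iter: "m \<le> k \<Longrightarrow> diff_op n k (k - m) (adY_poly_iter n k m) = 0"
proof (induction m)
  case 0
  show ?case
    by (rule poly_ext) (simp add: poly_diff_op)
next
  case (Suc m)
  then have l: "Suc (k - Suc m) = k - m"
    by simp
  have "diff_op n k (k - Suc m) (adY_poly_iter n k (Suc m))
      = adY_poly n (k - m) (diff_op n k (k - m) (adY_poly_iter n k m))"
    using diff_op_adY_poly[of "k - Suc m" k n "adY_poly_iter n k m"] Suc.prems by (simp add: l)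
  with Suc show ?case
    by (simp add: adY_poly_def)
qed

lemma Omega_superdiag_tprod:
  assumes "l \<le> k"
  shows "Omega n (superdiag n l (\<lambda>y. tprod n l y * poly g y))
    = superdiag n l (\<lambda>y. tprod n l y * (real (2 * k * (k + 1)) * poly g y - 2 * poly (diff_op n k l g) y))"
  unfolding Omega_def ad_Xmat_superdiag_tprod ad_Ymat_superdiag_tprod ad_Hmat_superdiag
    smult_superdiag superdiag_add
  by (intro arg_cong[where f = "superdiag n l"] ext)
    (use assms in \<open>simp add: poly_diff_op tval_Suc algebra_simps\<close>)

section \<open>Self-adjointness of \<open>\<Omega>\<close>\<close>

lemma ad_Xmat_Ymat: "ad (Xmat n) (Ymat n) = Hmat n"
proof -
  have X: "Xmat n = superdiag n (Suc 0) (tval n 1)"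
    by (simp add: Xmat_eq_superdiag)
  have "tval n 1 (alpha n (Suc 0)) = 0" "tval n 1 (alpha n (Suc n)) = 0"
    by (simp_all add: tval_alpha)
  then have "ad (Xmat n) (Ymat n) = superdiag n 0 (\<lambda>y. tval n 1 (y - 2) - tval n 1 y)"
    unfolding ad_def X by (simp add: Ymat_mult_superdiag superdiag_mult_Ymat superdiag_diff)
  also have "\<dots> = Hmat n"
    unfolding Hmat_eq_superdiag by (simp add: tval_def power2_eq_square field_simps)
  finally show ?thesis .
qed

lemma ad_carrier [simp]: "A \<in> carrier_mat n n \<Longrightarrow> B \<in> carrier_mat n n \<Longrightarrow> ad A B \<in> carrier_mat n n"
  by (simp add: ad_def minus_carrier_mat)

lemma Omega_carrier [simp]: "A \<in> carrier_mat n n \<Longrightarrow> Omega n A \<in> carrier_mat n n"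
  by (simp add: Omega_def)

lemma ad_ad_commute:
  assumes A: "A \<in> carrier_mat n n" and B: "B \<in> carrier_mat n n" and C: "C \<in> carrier_mat n n"
  shows "ad A (ad B C) = ad B (ad A C) + ad (ad A B) C"
proof -
  have expand: "ad P (ad Q C) = P * (Q * C) - P * (C * Q) - (Q * (C * P) - C * (Q * P))"
    if "P \<in> carrier_mat n n" "Q \<in> carrier_mat n n" for P Q
    unfolding ad_def using that C
    by (simp add: mult_minus_distrib_mat[where nr=n and n=n and nc=n]
        minus_mult_distrib_mat[where nr=n and n=n and nc=n])
  have "ad (ad A B) C = A * (B * C) - B * (A * C) - (C * (A * B) - C * (B * A))"
    unfolding ad_def using A B C
    by (simp add: mult_minus_distrib_mat[where nr=n and n=n and nc=n]
        minus_mult_distrib_mat[where nr=n and n=n and nc=n])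
  then show ?thesis
    unfolding expand[OF A B] expand[OF B A] by (intro eq_matI) (use A B C in simp_all)
qed

lemma mtrace_mult_comm:
  assumes A: "A \<in> carrier_mat n n" and B: "B \<in> carrier_mat n n"
  shows "mtrace (A * B) = mtrace (B * A)"
proof -
  have "mtrace (A * B) = (\<Sum>i<n. \<Sum>s<n. A $$ (i, s) * B $$ (s, i))"
    unfolding mtrace_def using A B
    by (auto intro!: sum.cong simp del: index_mult_mat(1) simp: index_mult_square[OF A B])
  also have "\<dots> = (\<Sum>s<n. \<Sum>i<n. B $$ (s, i) * A $$ (i, s))"
    by (subst sum.swap) (simp add: mult.commute)
  also have "\<dots> = mtrace (B * A)"
    unfolding mtrace_def using A B
    by (auto intro!: sum.cong simp del: index_mult_mat(1) simp: index_mult_square[OF B A])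
  finally show ?thesis .
qed

lemma mtrace_diff:
  "A \<in> carrier_mat n n \<Longrightarrow> B \<in> carrier_mat n n \<Longrightarrow> mtrace (A - B) = mtrace A - mtrace B"
  by (simp add: mtrace_def sum_subtractf)

lemma mtrace_add_mult:
  assumes "P \<in> carrier_mat n n" "Q \<in> carrier_mat n n" "B \<in> carrier_mat n n"
  shows "mtrace ((P + Q) * B) = mtrace (P * B) + mtrace (Q * B)"
  using assms by (simp add: add_mult_distrib_mat[of P n n] mtrace_def sum.distrib)

lemma mtrace_smult_mult:
  assumes "P \<in> carrier_mat n n" "B \<in> carrier_mat n n"
  shows "mtrace ((a \<cdot>\<^sub>m P) * B) = a * mtrace (P * B)"
  using assms by (simp add: mult_smult_assoc_mat[of P n n] mtrace_def sum_distrib_left)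

lemma mtrace_ad_mult:
  assumes A: "A \<in> carrier_mat n n" and B: "B \<in> carrier_mat n n" and Z: "Z \<in> carrier_mat n n"
  shows "mtrace (ad Z A * B) = - mtrace (ad Z B * A)"
proof -
  have expand: "ad Z P * Q = Z * (P * Q) - P * (Z * Q)"
    if "P \<in> carrier_mat n n" "Q \<in> carrier_mat n n" for P Q
    unfolding ad_def using that Z
    by (simp add: minus_mult_distrib_mat[where nr=n and n=n and nc=n] assoc_mult_mat[of _ n n _ n _ n])
  have "mtrace (Z * (A * B)) = mtrace (B * (Z * A))"
    using mtrace_mult_comm[of "Z * A" n B] A B Z by (simp add: assoc_mult_mat[of _ n n _ n _ n])
  moreover have "mtrace (A * (Z * B)) = mtrace (Z * (B * A))"
    using mtrace_mult_comm[of A n "Z * B"] A B Z by (simp add: assoc_mult_mat[of _ n n _ n _ n])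
  ultimately show ?thesis
    unfolding expand[OF A B] expand[OF B A] using A B Z by (simp add: mtrace_diff[of _ n])
qed

lemma mtrace_Omega_mult:
  assumes "A \<in> carrier_mat n n" "B \<in> carrier_mat n n"
  shows "mtrace (Omega n A * B) = 2 * mtrace (ad (Ymat n) (ad (Xmat n) A) * B)
    + 1 / 2 * mtrace (ad (Hmat n) (ad (Hmat n) A) * B) + mtrace (ad (Hmat n) A * B)"
  using assms by (simp add: Omega_def mtrace_add_mult[of _ n] mtrace_smult_mult[of _ n])

lemma mtrace_ad_ad_mult:
  assumes "A \<in> carrier_mat n n" "B \<in> carrier_mat n n" "P \<in> carrier_mat n n" "Q \<in> carrier_mat n n"
  shows "mtrace (ad P (ad Q A) * B) = mtrace (ad Q (ad P B) * A)"
proof -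
  have "mtrace (ad P (ad Q A) * B) = - mtrace (ad P B * ad Q A)"
    using assms by (simp add: mtrace_ad_mult[of "ad Q A" n B P])
  also have "\<dots> = - mtrace (ad Q A * ad P B)"
    using assms by (simp add: mtrace_mult_comm[of "ad P B" n])
  also have "\<dots> = mtrace (ad Q (ad P B) * A)"
    using assms by (simp add: mtrace_ad_mult[of A n "ad P B" Q])
  finally show ?thesis .
qed

text \<open>With \<open>ad Z\<^sup>* = - ad Z\<close>, the adjoint of \<open>\<Omega>\<close> is \<open>2 ad X ad Y + ad H\<^sup>2 / 2 - ad H\<close>,
  which equals \<open>\<Omega>\<close> because \<open>[ad X, ad Y] = ad [X, Y] = ad H\<close>.\<close>
lemma Omega_self_adjoint:
  assumes A: "A \<in> carrier_mat n n" and B: "B \<in> carrier_mat n n"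
  shows "mtrace (Omega n A * B) = mtrace (A * Omega n B)"
proof -
  let ?X = "Xmat n" and ?Y = "Ymat n" and ?H = "Hmat n"
  have "ad ?X (ad ?Y B) = ad ?Y (ad ?X B) + ad ?H B"
    using ad_ad_commute[of ?X n ?Y B] B by (simp add: ad_Xmat_Ymat)
  moreover have "mtrace (ad ?H A * B) = - mtrace (ad ?H B * A)"
    using A B by (simp add: mtrace_ad_mult[of A n B])
  ultimately have "mtrace (Omega n A * B) = mtrace (Omega n B * A)"
    using A B by (simp add: mtrace_Omega_mult mtrace_ad_ad_mult[of A n B] mtrace_add_mult[of _ n])
  then show ?thesis
    using A B mtrace_mult_comm[of "Omega n B" n A] by simp
qed

section \<open>Norms\<close>

lemma prod_diff_eq_fact_choose:
  "1 \<le> i \<Longrightarrow> (\<Prod>j\<in>{1..k}. real i - real j) = fact k * real ((i - 1) choose k)"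
  by (simp add: binomial_gbinomial gbinomial_mult_fact prod.atLeast1_atMost_eq atLeast0LessThan
      of_nat_diff algebra_simps)

lemma prod_add_eq_fact_choose: "(\<Prod>j\<in>{1..k}. real c + real j) = fact k * real ((c + k) choose k)"
proof -
  have "(\<Prod>j\<in>{1..k}. real c + real j) = (\<Prod>i<k. real (c + k) - real i)"
    by (rule prod.reindex_bij_witness[where i = "\<lambda>i. k - i" and j = "\<lambda>j. k - j"]) auto
  then show ?thesis
    by (simp add: binomial_gbinomial gbinomial_mult_fact atLeast0LessThan)
qed

lemma tprod_alpha_eq_fact_choose:
  assumes "1 \<le> i" "i \<le> n"
  shows "tprod n k (alpha n i) = (fact k)^2 * real ((i - 1) choose k) * real ((n - i + k) choose k)"
proof -
  have "tprod n k (alpha n i) = (\<Prod>j\<in>{1..k}. real i - real j) * (\<Prod>j\<in>{1..k}. real (n - i) + real j)"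
    unfolding tprod_def tval_alpha prod.distrib[symmetric] using assms
    by (intro prod.cong) (auto simp: of_nat_diff)
  then show ?thesis
    unfolding prod_diff_eq_fact_choose[OF assms(1)] prod_add_eq_fact_choose
    by (simp add: power2_eq_square)
qed

lemma sum_choose_mult_choose_diff:
  "(\<Sum>i\<le>m. (i choose a) * ((m - i) choose b)) = Suc m choose (a + b + 1)"
proof (induction b arbitrary: m)
  case 0
  then show ?case
    using sum_choose_upper[of a m] by simp
next
  case (Suc b)
  note IH_b = Suc.IH
  show ?case
  proof (induction m)
    case (Suc m)
    have "(\<Sum>i\<le>Suc m. (i choose a) * ((Suc m - i) choose Suc b))
        = (\<Sum>i\<le>m. (i choose a) * ((m - i) choose b) + (i choose a) * ((m - i) choose Suc b))"
      by (simp, intro sum.cong) (auto simp: Suc_diff_le algebra_simps)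
    also have "\<dots> = (Suc m choose (a + b + 1)) + (Suc m choose (a + Suc b + 1))"
      by (simp only: sum.distrib Suc.IH IH_b)
    also have "\<dots> = Suc (Suc m) choose (a + Suc b + 1)"
      by simp
    finally show ?case .
  qed simp
qed

lemma sum_choose_mult_choose_nodes:
  assumes "k < n"
  shows "(\<Sum>i\<in>{k+1..n}. ((i - 1) choose k) * ((n - i + k) choose k)) = (n + k) choose (2 * k + 1)"
proof -
  have "(\<Sum>i\<in>{k+1..n}. ((i - 1) choose k) * ((n - i + k) choose k))
      = (\<Sum>t\<in>{k..n - 1}. (t choose k) * ((n + k - 1 - t) choose k))"
    using assms by (intro sum.reindex_bij_witness[where i = Suc and j = "\<lambda>i. i - 1"]) auto
  also have "\<dots> = (\<Sum>t\<le>n + k - 1. (t choose k) * ((n + k - 1 - t) choose k))"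
    using assms by (intro sum.mono_neutral_left) (auto simp: binomial_eq_0)
  also have "\<dots> = (n + k) choose (2 * k + 1)"
    using assms sum_choose_mult_choose_diff[where m = "n + k - 1" and a = k and b = k]
    by (simp add: mult_2)
  finally show ?thesis .
qed

lemma mult_prod_square_diff_eq_fact_choose:
  "real n * (\<Prod>j\<in>{1..k}. (real n)^2 - (real j)^2) = fact (2 * k + 1) * real ((n + k) choose (2 * k + 1))"
proof -
  have "real n * (\<Prod>j\<in>{1..k}. (real n)^2 - (real j)^2) = (\<Prod>i<2 * k + 1. real n + real k - real i)"
  proof (induction k)
    case (Suc k)
    define P where "P = (\<Prod>i<2 * k + 1. real n + real k - real i)"
    define g where "g i = real n + real (Suc k) - real i" for i
    have shift: "g (Suc i) = real n + real k - real i" for i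
      by (simp add: g_def)
    have len: "2 * Suc k + 1 = Suc (Suc (2 * k + 1))"
      by simp
    have "real n * (\<Prod>j\<in>{1..Suc k}. (real n)^2 - (real j)^2)
        = real n * (\<Prod>j\<in>{1..k}. (real n)^2 - (real j)^2) * ((real n)^2 - (real (Suc k))^2)"
      by (simp add: prod.nat_ivl_Suc' mult.assoc)
    also have "\<dots> = g 0 * (P * g (Suc (2 * k + 1)))"
      unfolding Suc.IH P_def[symmetric] by (simp add: g_def power2_eq_square algebra_simps)
    also have "\<dots> = (\<Prod>i<2 * Suc k + 1. g i)"
      unfolding len P_def shift[symmetric]
      by (simp only: prod.lessThan_Suc_shift[of g] prod.lessThan_Suc[of "\<lambda>i. g (Suc i)"])
    finally show ?case
      by (simp only: g_def)
  qed simp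
  then show ?thesis
    by (simp only: binomial_gbinomial gbinomial_mult_fact atLeast0LessThan of_nat_add)
qed

definition fkl_norm :: "nat \<Rightarrow> nat \<Rightarrow> nat \<Rightarrow> real" where
  "fkl_norm n k l = fact (k - l) * (fact k)^2 / (fact (k + l) * (2 * real k + 1))
    * real n * (\<Prod>j\<in>{1..k}. (real n)^2 - (real j)^2)"

lemma sum_tprod_alpha_eq_fkl_norm:
  assumes "k < n"
  shows "(\<Sum>i\<in>{k+1..n}. tprod n k (alpha n i)) = fkl_norm n k k"
proof -
  have "(\<Sum>i\<in>{k+1..n}. tprod n k (alpha n i))
      = (fact k)^2 * real (\<Sum>i\<in>{k+1..n}. ((i - 1) choose k) * ((n - i + k) choose k))"
    by (simp add: tprod_alpha_eq_fact_choose sum_distrib_left mult.assoc)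
  also have "\<dots> = (fact k)^2 / fact (2 * k + 1) * (real n * (\<Prod>j\<in>{1..k}. (real n)^2 - (real j)^2))"
    unfolding sum_choose_mult_choose_nodes[OF assms] mult_prod_square_diff_eq_fact_choose by simp
  also have "\<dots> = fkl_norm n k k"
  proof -
    have "k + k = 2 * k"
      by simp
    then show ?thesis
      unfolding fkl_norm_def by (simp only:) (simp add: algebra_simps)
  qed
  finally show ?thesis .
qed

lemma ipl_eq_sum_tprod:
  "ipl n l f g = (\<Sum>i\<in>{l+1..n}. poly f (alpha n i) * poly g (alpha n i) * tprod n l (alpha n i))"
  by (simp add: ipl_def poly_Tpoly tprod_def)

lemma sum_diff_Suc_mult:
  fixes a b :: "nat \<Rightarrow> real"
  assumes "l \<le> n" "a l = 0" "a (Suc n) = 0"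
  shows "(\<Sum>i\<in>{l..n}. (a i - a (Suc i)) * b i) = (\<Sum>i\<in>{Suc l..n}. a i * (b i - b (i - 1)))"
proof -
  have "(\<Sum>i\<in>{l..n}. a (Suc i) * b i) = (\<Sum>i\<in>{Suc l..Suc n}. a i * b (i - 1))"
    unfolding sum.shift_bounds_cl_Suc_ivl by simp
  also have "\<dots> = (\<Sum>i\<in>{Suc l..n}. a i * b (i - 1))"
    using assms by simp
  finally have "(\<Sum>i\<in>{l..n}. a (Suc i) * b i) = (\<Sum>i\<in>{Suc l..n}. a i * b (i - 1))" .
  moreover have "(\<Sum>i\<in>{l..n}. a i * b i) = (\<Sum>i\<in>{Suc l..n}. a i * b i)"
    using sum.atLeast_Suc_atMost[OF assms(1), of "\<lambda>i. a i * b i"] assms(2) by simp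
  ultimately show ?thesis
    by (simp add: left_diff_distrib right_diff_distrib sum_subtractf)
qed

text \<open>Summation by parts: \<open>adY_poly n (l + 1)\<close> is adjoint to minus the forward difference,
  from \<open>\<langle>-,-\<rangle>\<^sub>l\<^sub>+\<^sub>1\<close> to \<open>\<langle>-,-\<rangle>\<^sub>l\<close>.\<close>
lemma ipl_adY_poly:
  assumes "Suc l \<le> n"
  shows "ipl n l (adY_poly n (Suc l) g) h
    = (\<Sum>i\<in>{Suc l+1..n}. poly g (alpha n i) * (poly h (alpha n i) - poly h (alpha n i + 2))
        * tprod n (Suc l) (alpha n i))"
proof -
  define a where "a i = tprod n (Suc l) (alpha n i) * poly g (alpha n i)" for i
  define b where "b i = poly h (alpha n i)" for i
  have "ipl n l (adY_poly n (Suc l) g) h = (\<Sum>i\<in>{Suc l..n}. (a i - a (Suc i)) * b i)"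
    unfolding ipl_eq_sum_tprod
  proof (rule sum.cong)
    fix i
    have "tval n (Suc l) (alpha n i) * tprod n l (alpha n i) = tprod n (Suc l) (alpha n i)"
      by (simp add: tprod_Suc)
    moreover have "tval n 0 (alpha n i) * tprod n l (alpha n i) = tprod n (Suc l) (alpha n (Suc i))"
      by (simp only: alpha_Suc tprod_Suc_minus_2)
    ultimately
    show "poly (adY_poly n (Suc l) g) (alpha n i) * poly h (alpha n i) * tprod n l (alpha n i)
        = (a i - a (Suc i)) * b i"
      unfolding poly_adY_poly a_def b_def by (simp add: alpha_Suc algebra_simps)
  qed simp
  also have "\<dots> = (\<Sum>i\<in>{Suc (Suc l)..n}. a i * (b i - b (i - 1)))"
    using assms by (intro sum_diff_Suc_mult) (simp_all add: a_def tprod_alpha_eq_0 tprod_alpha_Suc_eq_0)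
  also have "\<dots> = (\<Sum>i\<in>{Suc l+1..n}. poly g (alpha n i) * (poly h (alpha n i) - poly h (alpha n i + 2))
      * tprod n (Suc l) (alpha n i))"
    by (intro sum.cong) (auto simp: a_def b_def alpha_def of_nat_diff algebra_simps)
  finally show ?thesis .
qed

lemma fwd_diff_adY_poly:
  "l \<le> k \<Longrightarrow> fwd_diff (adY_poly n l g)
    = diff_op n k l g - smult ((real k + real l) * (real k - real l + 1)) g"
  by (rule poly_ext)
    (simp add: poly_fwd_diff poly_adY_poly poly_diff_op tval_def power2_eq_square field_simps)

lemma ipl_adY_poly_self:
  assumes "Suc l \<le> k" "k < n" "diff_op n k (Suc l) g = 0"
  shows "ipl n l (adY_poly n (Suc l) g) (adY_poly n (Suc l) g)
    = (real k + real (Suc l)) * (real k - real l) * ipl n (Suc l) g g"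
proof -
  let ?c = "(real k + real (Suc l)) * (real k - real l)"
  have shift: "poly (adY_poly n (Suc l) g) y - poly (adY_poly n (Suc l) g) (y + 2) = ?c * poly g y" for y
    using arg_cong[OF fwd_diff_adY_poly[OF assms(1), of n g], of "\<lambda>p. poly p y"] assms(3)
    by (simp add: poly_fwd_diff)
  have "ipl n l (adY_poly n (Suc l) g) (adY_poly n (Suc l) g)
      = (\<Sum>i\<in>{Suc l+1..n}. poly g (alpha n i) * (?c * poly g (alpha n i)) * tprod n (Suc l) (alpha n i))"
    using assms by (simp only: ipl_adY_poly shift)
  also have "\<dots> = ?c * ipl n (Suc l) g g"
    unfolding ipl_eq_sum_tprod by (simp add: sum_distrib_left algebra_simps)
  finally show ?thesis .
qed

lemma fkl_norm_Suc:
  assumes "Suc l \<le> k"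
  shows "fkl_norm n k l = (real k + real (Suc l)) * (real k - real l) * fkl_norm n k (Suc l)"
proof -
  have "k - l = Suc (k - Suc l)" "real (k - l) = real k - real l"
    using assms by (simp_all add: of_nat_diff)
  then have f1: "fact (k - l) = (real k - real l) * (fact (k - Suc l) :: real)"
    by (metis fact_Suc)
  have f2: "fact (k + Suc l) = (real k + real (Suc l)) * (fact (k + l) :: real)"
    by (simp add: add.commute)
  have "real k + real (Suc l) \<noteq> 0" "2 * real k + 1 \<noteq> 0"
    by simp_all
  then show ?thesis
    unfolding fkl_norm_def f1 f2 by (simp add: divide_simps)
qed

lemma ipl_adY_poly_iter:
  assumes "m \<le> k" "k < n"
  shows "ipl n (k - m) (adY_poly_iter n k m) (adY_poly_iter n k m) = fkl_norm n k (k - m)"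
  using assms(1)
proof (induction m)
  case 0
  have "ipl n k 1 1 = (\<Sum>i\<in>{k+1..n}. tprod n k (alpha n i))"
    by (simp add: ipl_eq_sum_tprod)
  also have "\<dots> = fkl_norm n k k"
    by (rule sum_tprod_alpha_eq_fkl_norm[OF assms(2)])
  finally show ?case
    by simp
next
  case (Suc m)
  define l where "l = k - Suc m"
  have l: "k - m = Suc l" "Suc l \<le> k"
    using Suc.prems by (simp_all add: l_def)
  have "diff_op n k (Suc l) (adY_poly_iter n k m) = 0"
    using diff_op_adY_poly_iter[of m k n] Suc.prems l(1) by simp
  moreover have "ipl n (Suc l) (adY_poly_iter n k m) (adY_poly_iter n k m) = fkl_norm n k (Suc l)"
    using Suc l(1) by simp
  moreover have "adY_poly_iter n k (Suc m) = adY_poly n (Suc l) (adY_poly_iter n k m)"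
    using l(1) by simp
  ultimately show ?case
    unfolding l_def[symmetric] using l(2) assms(2) by (simp add: ipl_adY_poly_self fkl_norm_Suc)
qed

lemma fkl_norm_pos:
  assumes "l \<le> k" "k < n"
  shows "fkl_norm n k l > 0"
proof -
  have "(real j)^2 < (real n)^2" if "j \<in> {1..k}" for j
    using that assms by (intro power_strict_mono) auto
  then have "(\<Prod>j\<in>{1..k}. (real n)^2 - (real j)^2) > 0"
    by (intro prod_pos) simp
  then show ?thesis
    unfolding fkl_norm_def using assms by simp
qed

lemma ipl_eq_0_if_Xmat_pow_mult_polyH_eq_0:
  assumes "Xmat n ^\<^sub>m l * polyH n f = 0\<^sub>m n n"
  shows "ipl n l f f = 0"
proof -
  have "\<forall>i\<in>{l+1..n}. tprod n l (alpha n i) * poly f (alpha n i) = 0"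
    using assms unfolding Xmat_pow_mult_polyH zero_eq_superdiag[of n l] superdiag_eq_iff .
  then show ?thesis
    unfolding ipl_eq_sum_tprod by (intro sum.neutral) (auto simp: algebra_simps)
qed

context
  fixes n k l :: nat
  assumes l_le_k: "l \<le> k" and k_less_n: "k < n"
begin

lemma fkl_mult_prod_Tpoly: "fkl n k l * (\<Prod>j\<in>{1..l}. Tpoly n j) = (bwd_diff ^^ (k - l)) (\<Prod>j\<in>{1..k}. Tpoly n j)"
  using prod_Tpoly_mult_adY_poly_iter[of "k - l" k n] l_le_k
  by (simp add: fkl_eq_adY_poly_iter[OF l_le_k k_less_n] mult.commute)

lemma diff_op_fkl: "diff_op n k l (fkl n k l) = 0"
  using diff_op_adY_poly_iter[of "k - l" k n] l_le_k
  by (simp add: fkl_eq_adY_poly_iter[OF l_le_k k_less_n])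

lemma ipl_fkl: "ipl n l (fkl n k l) (fkl n k l) = fkl_norm n k l"
  using ipl_adY_poly_iter[of "k - l" k n] l_le_k k_less_n
  by (simp add: fkl_eq_adY_poly_iter[OF l_le_k k_less_n])

lemma Xmat_pow_mult_polyH_fkl_neq_0: "Xmat n ^\<^sub>m l * polyH n (fkl n k l) \<noteq> 0\<^sub>m n n"
  using ipl_eq_0_if_Xmat_pow_mult_polyH_eq_0 ipl_fkl fkl_norm_pos[OF l_le_k k_less_n] by fastforce

lemma Omega_Xmat_pow_mult_polyH_fkl:
  "Omega n (Xmat n ^\<^sub>m l * polyH n (fkl n k l))
    = real (2 * k * (k + 1)) \<cdot>\<^sub>m (Xmat n ^\<^sub>m l * polyH n (fkl n k l))"
  unfolding Xmat_pow_mult_polyH Omega_superdiag_tprod[OF l_le_k] diff_op_fkl smult_superdiag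
  by (simp add: algebra_simps)

end

theorem theorem8p2:
  fixes n :: nat
  assumes "n \<ge> 1"
  shows "(\<forall>A \<in> carrier_mat n n. \<forall>B \<in> carrier_mat n n.
            mtrace (Omega n A * B) = mtrace (A * Omega n B))
       \<and> (\<forall>k l. l \<le> k \<and> k \<le> n - 1 \<longrightarrow>
            Xmat n ^\<^sub>m l * polyH n (fkl n k l) \<noteq> 0\<^sub>m n n
          \<and> Omega n (Xmat n ^\<^sub>m l * polyH n (fkl n k l))
              = real (2 * k * (k + 1)) \<cdot>\<^sub>m (Xmat n ^\<^sub>m l * polyH n (fkl n k l))
          \<and> Tpoly n 0 * bwd_diff (fwd_diff (fkl n k l))
              - smult (real (l + 1)) ([:real l, 1:] * fwd_diff (fkl n k l))
              + smult (real (k - l) * real (k + l + 1)) (fkl n k l) = 0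
          \<and> fkl n k l * (\<Prod>j\<in>{1..l}. Tpoly n j)
              = (bwd_diff ^^ (k - l)) (\<Prod>j\<in>{1..k}. Tpoly n j)
          \<and> ipl n l (fkl n k l) (fkl n k l)
              = fact (k - l) * (fact k)^2 / (fact (k + l) * (2 * real k + 1))
                * real n * (\<Prod>j\<in>{1..k}. (real n)^2 - (real j)^2))"
proof (intro conjI allI impI ballI)
  fix A B :: "real mat"
  assume "A \<in> carrier_mat n n" "B \<in> carrier_mat n n"
  then show "mtrace (Omega n A * B) = mtrace (A * Omega n B)"
    by (rule Omega_self_adjoint)
next
  fix k l :: nat
  assume "l \<le> k \<and> k \<le> n - 1"
  then have kl: "l \<le> k" "k < n"
    using assms by auto
  show "Xmat n ^\<^sub>m l * polyH n (fkl n k l) \<noteq> 0\<^sub>m n n"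
    using kl by (rule Xmat_pow_mult_polyH_fkl_neq_0)
  show "Omega n (Xmat n ^\<^sub>m l * polyH n (fkl n k l))
      = real (2 * k * (k + 1)) \<cdot>\<^sub>m (Xmat n ^\<^sub>m l * polyH n (fkl n k l))"
    using kl by (rule Omega_Xmat_pow_mult_polyH_fkl)
  show "Tpoly n 0 * bwd_diff (fwd_diff (fkl n k l))
      - smult (real (l + 1)) ([:real l, 1:] * fwd_diff (fkl n k l))
      + smult (real (k - l) * real (k + l + 1)) (fkl n k l) = 0"
    using diff_op_fkl[OF kl] unfolding diff_op_def .
  show "fkl n k l * (\<Prod>j\<in>{1..l}. Tpoly n j) = (bwd_diff ^^ (k - l)) (\<Prod>j\<in>{1..k}. Tpoly n j)"
    using kl by (rule fkl_mult_prod_Tpoly)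
  show "ipl n l (fkl n k l) (fkl n k l)
      = fact (k - l) * (fact k)^2 / (fact (k + l) * (2 * real k + 1))
        * real n * (\<Prod>j\<in>{1..k}. (real n)^2 - (real j)^2)"
    using ipl_fkl[OF kl] unfolding fkl_norm_def .
qed

end
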